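(* Consider the damped wave equation $u_{tt}=u_{xx}-\gamma(x)u_t+g(x,t)$ on $a\le x\le b$ with Dirichlet boundary data $u(a,t)=u_a(t)$, $u(b,t)=u_b(t)$ and initial data $u(x,0)=\phi(x)$, $u_t(x,0)=\psi(x)$, where $\gamma\ge 0$. Let $h=(b-a)/N$, $k>0$ the time step, and let $\mathcal{M}$ be the $(2N-2)\times(2N-2)$ block matrix $$\mathcal{M}=\begin{pmatrix}0 & I\\ \frac{1}{h^2}A & -\Gamma\end{pmatrix},$$ where $I$ is the $(N-1)\times(N-1)$ identity, $A$ is the $(N-1)\times(N-1)$ tridiagonal matrix with $-2$ on the diagonal and $1$ on the off-diagonals, and $\Gamma=\mathrm{diag}(\gamma(x_1),\dots,\gamma(x_{N-1}))$ with $x_i=a+ih$. Then the implicit scheme FD-(1,1), $$\big(I-\tfrac12\mathcal{M}k\big)V^{n+1}=\big(I+\tfrac12\mathcal{M}k\big)V^n+\tfrac{k}{2}\big(I+\tfrac12\mathcal{M}k\big)F(t_n)+\tfrac{k}{2}\big(I-\tfrac12\mathcal{M}k\big)F(t_n+k),$$ is unconditionally stable, i.e. stable for all $h>0$ and $k>0$.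
   Context: The scheme arises by writing $U=(u,u_t)^T$, discretizing $u_{xx}$ by central differences at interior nodes $x_1,\dots,x_{N-1}$, giving $V'(t)=\mathcal{M}V(t)+F(t)$ with $V(t)=(u(x_1,t),\dots,u(x_{N-1},t),u_t(x_1,t),\dots,u_t(x_{N-1},t))^T$ and $F(t)=(0,\,G(t)+\frac{1}{h^2}B(t))^T$, $G(t)=(g(x_1,t),\dots,g(x_{N-1},t))^T$, $B(t)=(u_a(t),0,\dots,0,u_b(t))^T$; $V^n$ approximates $V(t_n)$, $t_n=nk$. A scheme is called stable if all eigenvalues of its amplification matrix (here $(I-\frac12 k\mathcal{M})^{-1}(I+\frac12 k\mathcal{M})$) lie in the closed unit disk. *)

theory Defs
  imports Complex_Main "Jordan_Normal_Form.Gauss_Jordan_Elimination" "Jordan_Normal_Form.Char_Poly"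
begin

text \<open>Tridiagonal (N-1)x(N-1) matrix A: -2 on the diagonal, 1 on the off-diagonals
  (entries indexed from 0; row i corresponds to the node x_(i+1)).\<close>
definition tridiagA :: "nat \<Rightarrow> nat \<Rightarrow> nat \<Rightarrow> real" where
  "tridiagA N i j = (if i = j then -2 else if i = j + 1 \<or> j = i + 1 then 1 else 0)"

text \<open>The (2N-2)x(2N-2) block matrix M = [[0, I], [A/h^2, -Gamma]],
  Gamma = diag(gamma(x_1),...,gamma(x_(N-1))), x_i = a + i h, viewed as a complex matrix.\<close>
definition blockM :: "nat \<Rightarrow> real \<Rightarrow> real \<Rightarrow> (real \<Rightarrow> real) \<Rightarrow> complex mat" where
  "blockM N a h \<gamma> = mat (2*(N-1)) (2*(N-1)) (\<lambda>(i,j).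
     if i < N - 1 then (if j = i + (N - 1) then 1 else 0)
     else if j < N - 1 then complex_of_real (tridiagA N (i - (N - 1)) j / h^2)
     else if j - (N - 1) = i - (N - 1) then - complex_of_real (\<gamma> (a + real (i - (N - 1) + 1) * h))
     else 0)"

definition schemeL :: "nat \<Rightarrow> real \<Rightarrow> real \<Rightarrow> real \<Rightarrow> (real \<Rightarrow> real) \<Rightarrow> complex mat" where
  "schemeL N a h k \<gamma> = 1\<^sub>m (2*(N-1)) - complex_of_real (k/2) \<cdot>\<^sub>m blockM N a h \<gamma>"

definition schemeR :: "nat \<Rightarrow> real \<Rightarrow> real \<Rightarrow> real \<Rightarrow> (real \<Rightarrow> real) \<Rightarrow> complex mat" where
  "schemeR N a h k \<gamma> = 1\<^sub>m (2*(N-1)) + complex_of_real (k/2) \<cdot>\<^sub>m blockM N a h \<gamma>"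

definition amplification :: "nat \<Rightarrow> real \<Rightarrow> real \<Rightarrow> real \<Rightarrow> (real \<Rightarrow> real) \<Rightarrow> complex mat" where
  "amplification N a h k \<gamma> = the (mat_inverse (schemeL N a h k \<gamma>)) * schemeR N a h k \<gamma>"

definition scheme_stable :: "nat \<Rightarrow> real \<Rightarrow> real \<Rightarrow> real \<Rightarrow> (real \<Rightarrow> real) \<Rightarrow> bool" where
  "scheme_stable N a h k \<gamma> \<longleftrightarrow> invertible_mat (schemeL N a h k \<gamma>) \<and>
     (\<forall>ev. eigenvalue (amplification N a h k \<gamma>) ev \<longrightarrow> cmod ev \<le> 1)"

end

theory Submission
  imports Defs
begin

text \<open>If \<open>M v = \<mu> v\<close> with \<open>v = (x, y)\<close>, then \<open>y = \<mu> x\<close> and \<open>A x / h\<^sup>2 - \<Gamma> \<mu> x = \<mu>\<^sup>2 x\<close>.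
  Pairing with \<open>x\<close> and summing by parts gives \<open>P / h\<^sup>2 + \<mu> G + \<mu>\<^sup>2 X = 0\<close> with \<open>P, G \<ge> 0\<close>
  and \<open>X = |x|\<^sup>2 > 0\<close>, which forces \<open>Re \<mu> \<le> 0\<close>. Every eigenvalue of the amplification
  matrix has the form \<open>(1 + z) / (1 - z)\<close> with \<open>z = k \<mu> / 2\<close> for an eigenvalue \<open>\<mu>\<close> of \<open>M\<close>,
  and this Cayley map sends the closed left half-plane into the closed unit disk; likewise
  \<open>I - k M / 2\<close> is invertible because \<open>2 / k\<close> is not an eigenvalue of \<open>M\<close>.\<close>

lemma sum_lessThan_add_split:
  "(\<Sum>j<m + (n::nat). g j) = (\<Sum>j<m. g j) + (\<Sum>j<n. g (m + j))"
  by (induction n) (auto simp: add.assoc)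

lemma cmod_one_add_le_cmod_one_diff:
  fixes z :: complex
  assumes "Re z \<le> 0"
  shows "cmod (1 + z) \<le> cmod (1 - z)"
proof (rule power2_le_imp_le)
  show "(cmod (1 + z))\<^sup>2 \<le> (cmod (1 - z))\<^sup>2"
    unfolding cmod_power2 using assms by (simp add: power2_eq_square algebra_simps)
qed simp

lemma cayley_norm_le_1:
  fixes l z :: complex
  assumes "Re z \<le> 0" and "l * (1 - z) = 1 + z"
  shows "cmod l \<le> 1"
proof -
  have "1 - z \<noteq> 0"
    using assms(1) by (auto simp: complex_eq_iff)
  moreover have "cmod l * cmod (1 - z) \<le> 1 * cmod (1 - z)"
    using cmod_one_add_le_cmod_one_diff[OF assms(1)] assms(2) by (simp flip: norm_mult)
  ultimately show ?thesis
    by simp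
qed

lemma Re_nonpos_if_damped_quadratic_root:
  fixes \<mu> :: complex and P G X :: real
  assumes root: "of_real P + \<mu> * of_real G + \<mu>\<^sup>2 * of_real X = 0"
    and "P \<ge> 0" "G \<ge> 0" "X > 0"
  shows "Re \<mu> \<le> 0"
proof (rule ccontr)
  assume pos: "\<not> Re \<mu> \<le> 0"
  from arg_cong[OF root, of Im] have "Im \<mu> * (G + 2 * Re \<mu> * X) = 0"
    by (simp add: power2_eq_square algebra_simps)
  moreover have "G + 2 * Re \<mu> * X > 0"
    using pos assms by (simp add: add_nonneg_pos)
  ultimately have "Im \<mu> = 0"
    by simp
  with arg_cong[OF root, of Re] have "P + Re \<mu> * G + Re \<mu> * Re \<mu> * X = 0"
    by (simp add: power2_eq_square)
  moreover have "Re \<mu> * G \<ge> 0" "Re \<mu> * Re \<mu> * X > 0"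
    using pos assms by auto
  ultimately show False
    using assms(2) by linarith
qed

text \<open>Grid values \<open>x 0, \<dots>, x (n - 1)\<close> sit at the interior nodes \<open>1, \<dots>, n\<close>; the boundary
  nodes \<open>0\<close> and \<open>n + 1\<close> carry the homogeneous Dirichlet value \<open>0\<close>.\<close>
definition zero_padded :: "nat \<Rightarrow> (nat \<Rightarrow> 'a::zero) \<Rightarrow> nat \<Rightarrow> 'a" where
  "zero_padded n x j = (if 1 \<le> j \<and> j \<le> n then x (j - 1) else 0)"

lemma summation_by_parts_second_difference:
  fixes f :: "nat \<Rightarrow> complex"
  assumes "f 0 = 0"
  shows "(\<Sum>i<n. cnj (f (i + 1)) * (f i - 2 * f (i + 1) + f (i + 2)))
    = cnj (f n) * (f (n + 1) - f n) - (\<Sum>i<n. cnj (f (i + 1) - f i) * (f (i + 1) - f i))"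
proof (induction n)
  case 0
  show ?case
    using assms by simp
next
  case (Suc n)
  show ?case
    unfolding sum.lessThan_Suc Suc by (simp add: algebra_simps)
qed

lemma tridiagA_mult_eq_second_difference:
  fixes x :: "nat \<Rightarrow> complex"
  assumes "i < n"
  shows "(\<Sum>j<n. of_real (tridiagA N i j) * x j)
    = zero_padded n x i - 2 * zero_padded n x (i + 1) + zero_padded n x (i + 2)"
proof -
  have entry: "of_real (tridiagA N i j) * x j = (if j = i then -2 * x j else 0)
      + (if j + 1 = i then x j else 0) + (if j = i + 1 then x j else 0)" for j
    unfolding tridiagA_def by auto
  have "(\<Sum>j<n. if j + 1 = i then x j else 0) = (if 0 < i then x (i - 1) else 0)"
  proof (cases "0 < i")
    case True
    then have "(\<Sum>j<n. if j + 1 = i then x j else 0) = (\<Sum>j<n. if j = i - 1 then x j else 0)"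
      by (intro sum.cong) auto
    with True assms show ?thesis
      by simp
  qed simp
  then show ?thesis
    unfolding entry sum.distrib using assms by (auto simp: zero_padded_def)
qed

lemma cnj_mult_self: "cnj z * z = of_real ((cmod z)\<^sup>2)"
  by (simp add: complex_norm_square mult.commute del: of_real_power)

lemma tridiagA_quadratic_form:
  fixes x :: "nat \<Rightarrow> complex"
  shows "(\<Sum>i<n. cnj (x i) * (\<Sum>j<n. of_real (tridiagA N i j) * x j))
    = - of_real (\<Sum>i\<le>n. (cmod (zero_padded n x (i + 1) - zero_padded n x i))\<^sup>2)"
proof -
  define f where "f = zero_padded n x"
  have f: "f 0 = 0" "f (n + 1) = 0" "\<And>i. i < n \<Longrightarrow> f (i + 1) = x i"
    by (auto simp: f_def zero_padded_def)
  have "(\<Sum>i<n. cnj (x i) * (\<Sum>j<n. of_real (tridiagA N i j) * x j))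
      = (\<Sum>i<n. cnj (f (i + 1)) * (f i - 2 * f (i + 1) + f (i + 2)))"
    using f(3) by (intro sum.cong) (simp_all add: tridiagA_mult_eq_second_difference f_def)
  also have "\<dots> = - (cnj (f (n + 1) - f n) * (f (n + 1) - f n))
      - (\<Sum>i<n. cnj (f (i + 1) - f i) * (f (i + 1) - f i))"
    unfolding summation_by_parts_second_difference[of f, OF f(1)] f(2) by simp
  also have "\<dots> = - of_real (\<Sum>i\<le>n. (cmod (f (i + 1) - f i))\<^sup>2)"
    unfolding cnj_mult_self lessThan_Suc_atMost[symmetric] sum.lessThan_Suc by simp
  finally show ?thesis
    unfolding f_def .
qed

lemma discrete_damped_wave_energy_identity:
  fixes x :: "nat \<Rightarrow> complex" and g :: "nat \<Rightarrow> real" and h :: real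
  assumes "\<And>i. i < n \<Longrightarrow> (\<Sum>j<n. of_real (tridiagA N i j) * x j) / of_real (h\<^sup>2)
      - of_real (g i) * (\<mu> * x i) = \<mu>\<^sup>2 * x i"
  shows "of_real ((\<Sum>i\<le>n. (cmod (zero_padded n x (i + 1) - zero_padded n x i))\<^sup>2) / h\<^sup>2)
    + \<mu> * of_real (\<Sum>i<n. g i * (cmod (x i))\<^sup>2) + \<mu>\<^sup>2 * of_real (\<Sum>i<n. (cmod (x i))\<^sup>2) = 0"
proof -
  define P where "P = (\<Sum>i\<le>n. (cmod (zero_padded n x (i + 1) - zero_padded n x i))\<^sup>2)"
  define G where "G = (\<Sum>i<n. g i * (cmod (x i))\<^sup>2)"
  define X where "X = (\<Sum>i<n. (cmod (x i))\<^sup>2)"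
  define T where "T i = (\<Sum>j<n. of_real (tridiagA N i j) * x j)" for i
  have "(\<Sum>i<n. cnj (x i) * T i) / of_real (h\<^sup>2) - \<mu> * (\<Sum>i<n. of_real (g i) * (cnj (x i) * x i))
      = (\<Sum>i<n. cnj (x i) * (T i / of_real (h\<^sup>2) - of_real (g i) * (\<mu> * x i)))"
    unfolding sum_divide_distrib sum_distrib_left sum_subtractf[symmetric]
    by (intro sum.cong) (simp_all add: algebra_simps)
  also have "\<dots> = (\<Sum>i<n. cnj (x i) * (\<mu>\<^sup>2 * x i))"
    using assms by (intro sum.cong) (simp_all add: T_def)
  also have "\<dots> = \<mu>\<^sup>2 * (\<Sum>i<n. cnj (x i) * x i)"
    unfolding sum_distrib_left by (intro sum.cong) (simp_all add: algebra_simps)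
  finally have "- of_real P / of_real (h\<^sup>2) - \<mu> * of_real G = \<mu>\<^sup>2 * of_real X"
    unfolding T_def tridiagA_quadratic_form cnj_mult_self P_def G_def X_def by simp
  from this[symmetric] show ?thesis
    unfolding P_def[symmetric] G_def[symmetric] X_def[symmetric] of_real_divide by simp
qed

lemma blockM_carrier_mat: "blockM N a h \<gamma> \<in> carrier_mat (2 * (N - 1)) (2 * (N - 1))"
  unfolding blockM_def by simp

lemma blockM_mult_vec_nth:
  assumes "v \<in> carrier_vec (2 * (N - 1))" "i < 2 * (N - 1)"
  shows "(blockM N a h \<gamma> *\<^sub>v v) $ i = (\<Sum>j<N - 1. blockM N a h \<gamma> $$ (i, j) * v $ j)
    + (\<Sum>j<N - 1. blockM N a h \<gamma> $$ (i, N - 1 + j) * v $ (N - 1 + j))"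
proof -
  have "(blockM N a h \<gamma> *\<^sub>v v) $ i = (\<Sum>j<(N - 1) + (N - 1). blockM N a h \<gamma> $$ (i, j) * v $ j)"
    using assms blockM_carrier_mat[of N a h \<gamma>]
    by (simp add: scalar_prod_def lessThan_atLeast0 mult_2)
  then show ?thesis
    by (simp only: sum_lessThan_add_split)
qed

lemma blockM_mult_vec_upper:
  assumes "v \<in> carrier_vec (2 * (N - 1))" "i < N - 1"
  shows "(blockM N a h \<gamma> *\<^sub>v v) $ i = v $ (N - 1 + i)"
proof -
  have "(\<Sum>j<N - 1. blockM N a h \<gamma> $$ (i, j) * v $ j) = 0"
    using assms(2) by (intro sum.neutral) (auto simp: blockM_def)
  moreover have "(\<Sum>j<N - 1. blockM N a h \<gamma> $$ (i, N - 1 + j) * v $ (N - 1 + j))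
      = (\<Sum>j<N - 1. if j = i then v $ (N - 1 + j) else 0)"
    using assms(2) by (intro sum.cong) (auto simp: blockM_def)
  ultimately show ?thesis
    using assms by (simp add: blockM_mult_vec_nth)
qed

lemma blockM_mult_vec_lower:
  assumes "v \<in> carrier_vec (2 * (N - 1))" "i < N - 1"
  shows "(blockM N a h \<gamma> *\<^sub>v v) $ (N - 1 + i)
    = (\<Sum>j<N - 1. of_real (tridiagA N i j) * v $ j) / of_real (h\<^sup>2)
      - of_real (\<gamma> (a + real (i + 1) * h)) * v $ (N - 1 + i)"
proof -
  have "(\<Sum>j<N - 1. blockM N a h \<gamma> $$ (N - 1 + i, j) * v $ j)
      = (\<Sum>j<N - 1. of_real (tridiagA N i j) * v $ j) / of_real (h\<^sup>2)"
    unfolding sum_divide_distrib using assms(2) by (intro sum.cong) (auto simp: blockM_def)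
  moreover have "(\<Sum>j<N - 1. blockM N a h \<gamma> $$ (N - 1 + i, N - 1 + j) * v $ (N - 1 + j))
      = (\<Sum>j<N - 1. if j = i then - of_real (\<gamma> (a + real (i + 1) * h)) * v $ (N - 1 + j) else 0)"
    using assms(2) by (intro sum.cong) (auto simp: blockM_def add.commute)
  ultimately show ?thesis
    using assms by (simp add: blockM_mult_vec_nth)
qed

lemma blockM_eigenvalue_Re_nonpos:
  assumes damping: "\<forall>i<N - 1. \<gamma> (a + real (i + 1) * h) \<ge> 0"
    and "eigenvalue (blockM N a h \<gamma>) \<mu>"
  shows "Re \<mu> \<le> 0"
proof -
  define n where "n = N - 1"
  obtain v where v: "v \<in> carrier_vec (2 * n)" "v \<noteq> 0\<^sub>v (2 * n)"
      and eigen: "blockM N a h \<gamma> *\<^sub>v v = \<mu> \<cdot>\<^sub>v v"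
    using assms(2) blockM_carrier_mat[of N a h \<gamma>]
    unfolding eigenvalue_def eigenvector_def n_def by auto
  define x where "x i = v $ i" for i
  define g where "g i = \<gamma> (a + real (i + 1) * h)" for i
  have velocity: "v $ (n + i) = \<mu> * x i" if "i < n" for i
    using arg_cong[OF eigen, of "\<lambda>w. w $ i"] blockM_mult_vec_upper[of v N i a h \<gamma>] v(1) that
    by (simp add: n_def x_def)
  have wave: "(\<Sum>j<n. of_real (tridiagA N i j) * x j) / of_real (h\<^sup>2) - of_real (g i) * (\<mu> * x i)
      = \<mu>\<^sup>2 * x i" if "i < n" for i
    using arg_cong[OF eigen, of "\<lambda>w. w $ (n + i)"] blockM_mult_vec_lower[of v N i a h \<gamma>]
      velocity[OF that] v(1) that
    by (simp add: n_def x_def g_def power2_eq_square)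
  have "\<exists>i<n. x i \<noteq> 0"
  proof (rule ccontr)
    assume "\<not> (\<exists>i<n. x i \<noteq> 0)"
    then have "v $ i = 0" if "i < 2 * n" for i
      using velocity[of "i - n"] that by (cases "i < n") (auto simp: x_def)
    then have "v = 0\<^sub>v (2 * n)"
      using v(1) by (intro eq_vecI) auto
    with v(2) show False ..
  qed
  then have "(\<Sum>i<n. (cmod (x i))\<^sup>2) > 0"
    by (auto intro: sum_pos2)
  moreover have "(\<Sum>i\<le>n. (cmod (zero_padded n x (i + 1) - zero_padded n x i))\<^sup>2) / h\<^sup>2 \<ge> 0"
    by (intro divide_nonneg_nonneg sum_nonneg) auto
  moreover have "(\<Sum>i<n. g i * (cmod (x i))\<^sup>2) \<ge> 0"
    using damping by (intro sum_nonneg mult_nonneg_nonneg) (auto simp: g_def n_def)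
  ultimately show ?thesis
    using Re_nonpos_if_damped_quadratic_root discrete_damped_wave_energy_identity[OF wave] by blast
qed

lemma smult_mat_mult_vec:
  fixes A :: "'a::comm_ring_1 mat"
  shows "A \<in> carrier_mat n m \<Longrightarrow> v \<in> carrier_vec m \<Longrightarrow> (c \<cdot>\<^sub>m A) *\<^sub>v v = c \<cdot>\<^sub>v (A *\<^sub>v v)"
  by (intro eq_vecI) (auto simp: scalar_prod_def sum_distrib_left mult.assoc)

lemma one_add_smult_mat_mult_vec:
  fixes M :: "'a::comm_ring_1 mat"
  shows "M \<in> carrier_mat n n \<Longrightarrow> v \<in> carrier_vec n
    \<Longrightarrow> (1\<^sub>m n + c \<cdot>\<^sub>m M) *\<^sub>v v = v + c \<cdot>\<^sub>v (M *\<^sub>v v)"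
  by (subst add_mult_distrib_mat_vec[of _ n n]) (auto simp: smult_mat_mult_vec)

lemma one_diff_smult_mat_mult_vec:
  fixes M :: "'a::comm_ring_1 mat"
  shows "M \<in> carrier_mat n n \<Longrightarrow> v \<in> carrier_vec n
    \<Longrightarrow> (1\<^sub>m n - c \<cdot>\<^sub>m M) *\<^sub>v v = v - c \<cdot>\<^sub>v (M *\<^sub>v v)"
  by (subst minus_mult_distrib_mat_vec[of _ n n]) (auto simp: smult_mat_mult_vec)

lemma invertible_mat_if_mat_inverse_eq_Some:
  assumes "A \<in> carrier_mat n n" and "mat_inverse A = Some B"
  shows "invertible_mat A"
  using mat_inverse(2)[OF assms] assms(1) unfolding invertible_mat_def inverts_mat_def by auto

lemma mat_inverse_one_diff_smult_exists:
  fixes M :: "complex mat" and c :: real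
  assumes M: "M \<in> carrier_mat n n" and "c > 0"
    and spectrum: "\<And>\<mu>. eigenvalue M \<mu> \<Longrightarrow> Re \<mu> \<le> 0"
  obtains B where "mat_inverse (1\<^sub>m n - of_real c \<cdot>\<^sub>m M) = Some B"
proof -
  define L where "L = 1\<^sub>m n - of_real c \<cdot>\<^sub>m M"
  have L: "L \<in> carrier_mat n n"
    unfolding L_def using M by auto
  have "det L \<noteq> 0"
  proof
    assume "det L = 0"
    then obtain v where v: "v \<in> carrier_vec n" "v \<noteq> 0\<^sub>v n" "L *\<^sub>v v = 0\<^sub>v n"
      using det_0_iff_vec_prod_zero[OF L] by auto
    have "M *\<^sub>v v = of_real (1 / c) \<cdot>\<^sub>v v"
    proof (rule eq_vecI)
      fix i
      assume "i < dim_vec (of_real (1 / c) \<cdot>\<^sub>v v)"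
      then have i: "i < n"
        using v(1) by simp
      have "v $ i - of_real c * (M *\<^sub>v v) $ i = 0"
        using arg_cong[OF v(3), of "\<lambda>w. w $ i"] i v(1) M
        by (simp add: L_def one_diff_smult_mat_mult_vec)
      then show "(M *\<^sub>v v) $ i = (of_real (1 / c) \<cdot>\<^sub>v v) $ i"
        using i v(1) \<open>c > 0\<close> by (simp add: field_simps)
    qed (use M v(1) in simp)
    then have "eigenvalue M (of_real (1 / c))"
      unfolding eigenvalue_def eigenvector_def using M v by auto
    with spectrum \<open>c > 0\<close> show False
      by fastforce
  qed
  show thesis
  proof (cases "mat_inverse L")
    case None
    with mat_inverse(1)[OF L None, of "()"] det_non_zero_imp_unit[OF L \<open>det L \<noteq> 0\<close>, of "()"]
    show ?thesis
      by simp
  qed (use that in \<open>simp add: L_def\<close>)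
qed

lemma cayley_eigenvector:
  fixes M :: "complex mat" and c l :: complex
  assumes M: "M \<in> carrier_mat n n" and v: "v \<in> carrier_vec n" "v \<noteq> 0\<^sub>v n" and "c \<noteq> 0"
    and eigen: "(1\<^sub>m n + c \<cdot>\<^sub>m M) *\<^sub>v v = l \<cdot>\<^sub>v ((1\<^sub>m n - c \<cdot>\<^sub>m M) *\<^sub>v v)"
  shows "l \<noteq> -1" and "M *\<^sub>v v = ((l - 1) / (c * (1 + l))) \<cdot>\<^sub>v v"
proof -
  have entry: "v $ i + c * (M *\<^sub>v v) $ i = l * (v $ i - c * (M *\<^sub>v v) $ i)" if "i < n" for i
    using arg_cong[OF eigen, of "\<lambda>w. w $ i"] that M v(1)
    by (simp add: one_add_smult_mat_mult_vec one_diff_smult_mat_mult_vec)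
  show "l \<noteq> -1"
  proof
    assume "l = -1"
    then have "v = 0\<^sub>v n"
      using entry v(1) by (intro eq_vecI) auto
    with v(2) show False ..
  qed
  then have "c * (1 + l) \<noteq> 0"
    using \<open>c \<noteq> 0\<close> by (auto simp: add_eq_0_iff)
  then show "M *\<^sub>v v = ((l - 1) / (c * (1 + l))) \<cdot>\<^sub>v v"
    using entry M v(1) by (intro eq_vecI) (auto simp: field_simps)
qed

lemma crank_nicolson_eigenvalue_norm_le_1:
  fixes M :: "complex mat" and c :: real
  assumes M: "M \<in> carrier_mat n n" and "c > 0"
    and spectrum: "\<And>\<mu>. eigenvalue M \<mu> \<Longrightarrow> Re \<mu> \<le> 0"
    and inverse: "mat_inverse (1\<^sub>m n - of_real c \<cdot>\<^sub>m M) = Some B"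
    and "eigenvalue (B * (1\<^sub>m n + of_real c \<cdot>\<^sub>m M)) l"
  shows "cmod l \<le> 1"
proof -
  define L where "L = 1\<^sub>m n - of_real c \<cdot>\<^sub>m M"
  define R where "R = 1\<^sub>m n + of_real c \<cdot>\<^sub>m M"
  have L: "L \<in> carrier_mat n n" and R: "R \<in> carrier_mat n n"
    using M by (auto simp: L_def R_def)
  have B: "L * B = 1\<^sub>m n" "B \<in> carrier_mat n n"
    using mat_inverse(2)[OF L inverse[folded L_def]] by auto
  obtain v where v: "v \<in> carrier_vec n" "v \<noteq> 0\<^sub>v n" and eigen: "(B * R) *\<^sub>v v = l \<cdot>\<^sub>v v"
    using assms(5) B(2) unfolding eigenvalue_def eigenvector_def R_def[symmetric] by auto
  have "R *\<^sub>v v = (L * B) *\<^sub>v (R *\<^sub>v v)"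
    using R v(1) by (simp add: B(1))
  also have "\<dots> = L *\<^sub>v ((B * R) *\<^sub>v v)"
    using L B(2) R v(1) by simp
  also have "\<dots> = l \<cdot>\<^sub>v (L *\<^sub>v v)"
    using L v(1) by (simp add: eigen mult_mat_vec)
  finally have "R *\<^sub>v v = l \<cdot>\<^sub>v (L *\<^sub>v v)" .
  moreover have c: "complex_of_real c \<noteq> 0"
    using \<open>c > 0\<close> by simp
  ultimately have "l \<noteq> -1" and Mv: "M *\<^sub>v v = ((l - 1) / (of_real c * (1 + l))) \<cdot>\<^sub>v v"
    using cayley_eigenvector[OF M v, of "of_real c" l] unfolding L_def R_def by auto
  define \<mu> where "\<mu> = (l - 1) / (of_real c * (1 + l))"
  have "eigenvalue M \<mu>"
    unfolding eigenvalue_def eigenvector_def \<mu>_def using M v Mv by auto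
  then have "Re (of_real c * \<mu>) \<le> 0"
    using spectrum \<open>c > 0\<close> by (simp add: mult_nonneg_nonpos)
  moreover have "l * (1 - of_real c * \<mu>) = 1 + of_real c * \<mu>"
  proof -
    have "1 + l \<noteq> 0"
      using \<open>l \<noteq> -1\<close> by (auto simp: add_eq_0_iff)
    moreover have "of_real c * \<mu> = (l - 1) / (1 + l)"
      using c by (simp add: \<mu>_def)
    ultimately show ?thesis
      by (simp add: field_simps)
  qed
  ultimately show ?thesis
    by (rule cayley_norm_le_1)
qed

lemma grid_node_mem_interval:
  fixes a b :: real
  assumes "a \<le> b" and "i \<le> N"
  shows "a + real i * ((b - a) / real N) \<in> {a..b}"
proof -
  have "real i * ((b - a) / real N) \<le> b - a"
  proof (cases "N = 0")
    case False
    have "real i * ((b - a) / real N) \<le> real N * ((b - a) / real N)"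
      using assms by (intro mult_right_mono) auto
    with False show ?thesis
      by simp
  qed (use assms in simp)
  then show ?thesis
    using assms by simp
qed

theorem proposition2:
  fixes N :: nat and a b k :: real and \<gamma> :: "real \<Rightarrow> real"
  assumes "N \<ge> 2" and "a < b" and "k > 0"
    and "\<forall>x\<in>{a..b}. \<gamma> x \<ge> 0"
  shows "scheme_stable N a ((b - a) / real N) k \<gamma>"
proof -
  define h where "h = (b - a) / real N"
  have "\<gamma> (a + real (i + 1) * h) \<ge> 0" if "i < N - 1" for i
  proof -
    have "a + real (i + 1) * h \<in> {a..b}"
      unfolding h_def using assms(2) that by (intro grid_node_mem_interval) auto
    with assms(4) show ?thesis
      by blast
  qed
  then have spectrum: "\<And>\<mu>. eigenvalue (blockM N a h \<gamma>) \<mu> \<Longrightarrow> Re \<mu> \<le> 0"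
    using blockM_eigenvalue_Re_nonpos by blast
  have "k / 2 > 0"
    using assms(3) by simp
  obtain B where B: "mat_inverse (schemeL N a h k \<gamma>) = Some B"
    using mat_inverse_one_diff_smult_exists[OF blockM_carrier_mat \<open>k / 2 > 0\<close> spectrum]
    unfolding schemeL_def by blast
  have "schemeL N a h k \<gamma> \<in> carrier_mat (2 * (N - 1)) (2 * (N - 1))"
    using blockM_carrier_mat[of N a h \<gamma>] unfolding schemeL_def by auto
  then have "invertible_mat (schemeL N a h k \<gamma>)"
    using B by (rule invertible_mat_if_mat_inverse_eq_Some)
  moreover have "cmod l \<le> 1" if "eigenvalue (amplification N a h k \<gamma>) l" for l
    using crank_nicolson_eigenvalue_norm_le_1[OF blockM_carrier_mat \<open>k / 2 > 0\<close> spectrum]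
      B that unfolding amplification_def schemeL_def schemeR_def by simp
  ultimately show ?thesis
    unfolding scheme_stable_def h_def by blast
qed

end
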